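(* Let $n\in\mathbb{N}$, and let $\mathcal{H}\in C^1(\mathbb{R}^{n},\mathbb{R})$, $E\in C(\mathbb{R}^{n},\mathbb{R}^{n,n})$ and $z\in C(\mathbb{R}^{n},\mathbb{R}^{n})$ satisfy $E(x)^\top z(x)=\nabla\mathcal{H}(x)$ for all $x\in\mathbb{R}^n$. Assume further that $E(x)$ is symmetric and positive definite for every $x\in\mathbb{R}^n$. Define $\overline{E}\colon\mathbb{R}^n\times\mathbb{R}^n\to\mathbb{R}^{n,n}$ and $\overline{z}\colon\mathbb{R}^n\times\mathbb{R}^n\to\mathbb{R}^n$ by $$\overline{E}(x,\hat x):=E\!\left(\tfrac{\hat x+x}{2}\right),$$ $$\overline{z}(x,\hat x):=\begin{cases} z\!\left(\tfrac{\hat x+x}{2}\right)+\dfrac{\mathcal{H}(\hat x)-\mathcal{H}(x)-z\!\left(\tfrac{\hat x+x}{2}\right)^\top\overline{E}(x,\hat x)(\hat x-x)}{(\hat x-x)^\top\overline{E}(x,\hat x)(\hat x-x)}\,(\hat x-x), & \text{if } \hat x\neq x,\\[2mm] z(x), & \text{otherwise}.\end{cases}$$ Then $(\overline{E},\overline{z})$ is a discrete gradient pair for $(\mathcal{H},E,z)$.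
   Context: Let $\mathcal{H}\in C^1(\mathbb{R}^n,\mathbb{R})$, $E\in C(\mathbb{R}^n,\mathbb{R}^{n,n})$ and $z\in C(\mathbb{R}^n,\mathbb{R}^n)$ satisfy $\nabla\mathcal{H}(x)=E(x)^\top z(x)$ for all $x\in\mathbb{R}^n$. A pair $(\overline{E},\overline{z})\in C(\mathbb{R}^n\times\mathbb{R}^n,\mathbb{R}^{n,n})\times C(\mathbb{R}^n\times\mathbb{R}^n,\mathbb{R}^n)$ (i.e. both maps continuous) is called a discrete gradient pair for $(\mathcal{H},E,z)$ if (i) $\overline{E}(x,x)=E(x)$ for all $x\in\mathbb{R}^n$; (ii) $\overline{z}(x,x)=z(x)$ for all $x\in\mathbb{R}^n$; (iii) $\overline{z}(x,\hat x)^\top\overline{E}(x,\hat x)(\hat x-x)=\mathcal{H}(\hat x)-\mathcal{H}(x)$ for all $(x,\hat x)\in\mathbb{R}^n\times\mathbb{R}^n$. *)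

theory Defs
  imports "HOL-Analysis.Analysis"
begin

definition has_gradient_at :: "(real^'n \<Rightarrow> real) \<Rightarrow> real^'n \<Rightarrow> real^'n \<Rightarrow> bool" where
  "has_gradient_at H g x \<longleftrightarrow> (H has_derivative (\<lambda>h. g \<bullet> h)) (at x)"

definition C1_with_gradient :: "(real^'n \<Rightarrow> real) \<Rightarrow> (real^'n \<Rightarrow> real^'n) \<Rightarrow> bool" where
  "C1_with_gradient H grad \<longleftrightarrow> (\<forall>x. has_gradient_at H (grad x) x) \<and> continuous_on UNIV grad"

definition symmetric_matrix :: "real^'n^'n \<Rightarrow> bool" where
  "symmetric_matrix A \<longleftrightarrow> transpose A = A"

definition pos_def_matrix :: "real^'n^'n \<Rightarrow> bool" where
  "pos_def_matrix A \<longleftrightarrow> (\<forall>v. v \<noteq> 0 \<longrightarrow> v \<bullet> (A *v v) > 0)"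

definition discrete_gradient_pair ::
  "(real^'n \<Rightarrow> real) \<Rightarrow> (real^'n \<Rightarrow> real^'n^'n) \<Rightarrow> (real^'n \<Rightarrow> real^'n)
   \<Rightarrow> (real^'n \<Rightarrow> real^'n \<Rightarrow> real^'n^'n) \<Rightarrow> (real^'n \<Rightarrow> real^'n \<Rightarrow> real^'n) \<Rightarrow> bool" where
  "discrete_gradient_pair H E z Eb zb \<longleftrightarrow>
     continuous_on UNIV (\<lambda>p. Eb (fst p) (snd p)) \<and>
     continuous_on UNIV (\<lambda>p. zb (fst p) (snd p)) \<and>
     (\<forall>x. Eb x x = E x) \<and>
     (\<forall>x. zb x x = z x) \<and>
     (\<forall>x xh. zb x xh \<bullet> (Eb x xh *v (xh - x)) = H xh - H x)"

end

theory Submission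
  imports Defs
begin

text \<open>
  At the midpoint \<open>m\<close> of \<open>x\<close> and \<open>x\<^sub>h\<close>, with \<open>d = x\<^sub>h - x\<close>, the identity
  \<open>z(m) \<bullet> E(m) d = \<nabla>H(m) \<bullet> d\<close> holds, so the numerator of the correction term
  is \<open>H(x\<^sub>h) - H(x) - \<nabla>H(m) \<bullet> d\<close>, which is \<open>o(|d|)\<close> near the diagonal by the mean value
  theorem and continuity of \<open>\<nabla>H\<close>. Continuity of \<open>E\<close> and positive definiteness keep the
  denominator \<open>d \<bullet> E(m) d\<close> above \<open>c |d|\<^sup>2\<close> near the diagonal, so the correction vector
  tends to \<open>0\<close> there and the discrete gradient is continuous.
\<close>

definition midpoint_correction ::
  "(real^'n \<Rightarrow> real) \<Rightarrow> (real^'n \<Rightarrow> real^'n^'n) \<Rightarrow> (real^'n \<Rightarrow> real^'n)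
   \<Rightarrow> real^'n \<Rightarrow> real^'n \<Rightarrow> real^'n" where
  "midpoint_correction H E z x xh =
     (let m = midpoint x xh; d = xh - x
      in ((H xh - H x - z m \<bullet> (E m *v d)) / (d \<bullet> (E m *v d))) *\<^sub>R d)"

definition midpoint_discrete_gradient ::
  "(real^'n \<Rightarrow> real) \<Rightarrow> (real^'n \<Rightarrow> real^'n^'n) \<Rightarrow> (real^'n \<Rightarrow> real^'n)
   \<Rightarrow> real^'n \<Rightarrow> real^'n \<Rightarrow> real^'n" where
  "midpoint_discrete_gradient H E z x xh =
     (if xh \<noteq> x then z (midpoint x xh) + midpoint_correction H E z x xh else z x)"

lemma midpoint_eq_half_sum: "midpoint x xh = (1/2) *\<^sub>R (xh + x)"
  by (simp add: midpoint_def add.commute)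

lemma inner_add_quotient_scaleR:
  fixes u v w :: "'a::real_inner"
  assumes "v \<bullet> u \<noteq> 0"
  shows "(w + ((c - w \<bullet> u) / (v \<bullet> u)) *\<^sub>R v) \<bullet> u = c"
  using assms by (simp add: inner_add_left)

lemma norm_scaleR_quotient_le:
  fixes d :: "'a::real_normed_vector"
  assumes "\<bar>a\<bar> \<le> \<epsilon> * norm d" "c * (norm d)\<^sup>2 \<le> b" "0 < c" "0 \<le> \<epsilon>"
  shows "norm ((a / b) *\<^sub>R d) \<le> \<epsilon> / c"
proof (cases "d = 0")
  case False
  then have "0 < c * (norm d)\<^sup>2" using assms(3) by simp
  then have "norm ((a / b) *\<^sub>R d) \<le> \<epsilon> * norm d / (c * (norm d)\<^sup>2) * norm d"
    using assms by (auto simp: abs_divide intro!: mult_right_mono frac_le)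
  also have "\<dots> = \<epsilon> / c"
    using False by (simp add: power2_eq_square)
  finally show ?thesis .
qed (use assms in simp)

lemma continuous_on_matrix_vector_mult [continuous_intros]:
  fixes A :: "'a::topological_space \<Rightarrow> real^'n^'m"
  assumes "continuous_on S A" "continuous_on S v"
  shows "continuous_on S (\<lambda>p. A p *v v p)"
  unfolding matrix_vector_mult_def using assms by (intro continuous_intros) auto

lemma norm_matrix_vector_mult_le:
  fixes A :: "real^'n^'m"
  shows "norm (A *v x) \<le> real CARD('m) * real CARD('n) * norm A * norm x"
proof -
  have "\<bar>A $ i $ j\<bar> \<le> norm A" for i j
    using component_le_norm_cart[of "A $ i" j] Finite_Cartesian_Product.norm_nth_le[of A i] by linarith
  then have "onorm ((*v) A) \<le> real CARD('m) * real CARD('n) * norm A"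
    by (rule onorm_le_matrix_component)
  then have "onorm ((*v) A) * norm x \<le> real CARD('m) * real CARD('n) * norm A * norm x"
    by (rule mult_right_mono) simp
  then show ?thesis
    using onorm[OF matrix_vector_mul_bounded_linear, of A x] by linarith
qed

lemma pos_def_matrix_inner_pos: "pos_def_matrix A \<Longrightarrow> v \<noteq> 0 \<Longrightarrow> 0 < v \<bullet> (A *v v)"
  unfolding pos_def_matrix_def by blast

lemma pos_def_matrix_coercive:
  fixes A :: "real^'n^'n"
  assumes "pos_def_matrix A"
  obtains c where "0 < c" "\<And>v. c * (norm v)\<^sup>2 \<le> v \<bullet> (A *v v)"
proof -
  have "continuous_on (sphere 0 1) (\<lambda>v::real^'n. v \<bullet> (A *v v))"
    by (intro continuous_intros)
  then obtain u where u: "u \<in> sphere 0 1"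
    and u_min: "\<And>w. w \<in> sphere 0 1 \<Longrightarrow> u \<bullet> (A *v u) \<le> w \<bullet> (A *v w)"
    using continuous_attains_inf[of "sphere (0::real^'n) 1"] by fastforce
  have "u \<noteq> 0"
    using u by auto
  then have "0 < u \<bullet> (A *v u)"
    using pos_def_matrix_inner_pos[OF assms] by blast
  moreover have "u \<bullet> (A *v u) * (norm v)\<^sup>2 \<le> v \<bullet> (A *v v)" for v
  proof (cases "v = 0")
    case False
    define w where "w = (1 / norm v) *\<^sub>R v"
    have w: "w \<in> sphere 0 1" and v: "v = norm v *\<^sub>R w"
      using False by (simp_all add: w_def)
    have "v \<bullet> (A *v v) = (norm v)\<^sup>2 * (w \<bullet> (A *v w))"
      by (subst (1 2) v) (simp add: matrix_vector_mult_scaleR power2_eq_square)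
    then show ?thesis
      using u_min[OF w] by (simp add: mult.commute mult_right_mono)
  qed simp
  ultimately show ?thesis by (rule that)
qed

lemma pos_def_matrix_coercive_near:
  fixes E :: "'a::metric_space \<Rightarrow> real^'n^'n"
  assumes "isCont E x0" "pos_def_matrix (E x0)"
  obtains c where "0 < c" "\<forall>\<^sub>F y in nhds x0. \<forall>v. c * (norm v)\<^sup>2 \<le> v \<bullet> (E y *v v)"
proof -
  obtain c where c: "0 < c" "\<And>v. c * (norm v)\<^sup>2 \<le> v \<bullet> (E x0 *v v)"
    using pos_def_matrix_coercive[OF assms(2)] by blast
  define K :: real where "K = real CARD('n) * real CARD('n)"
  have "0 < K" by (simp add: K_def)
  have "0 < c / (2 * K)"
    using \<open>0 < c\<close> \<open>0 < K\<close> by simp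
  then have near: "\<forall>\<^sub>F y in nhds x0. dist (E y) (E x0) < c / (2 * K)"
    using assms(1) unfolding continuous_at_eps_delta eventually_nhds_metric by blast
  have bound: "c / 2 * (norm v)\<^sup>2 \<le> v \<bullet> (E y *v v)"
    if "dist (E y) (E x0) < c / (2 * K)" for y v
  proof -
    have "\<bar>v \<bullet> ((E y - E x0) *v v)\<bar> \<le> norm v * norm ((E y - E x0) *v v)"
      by (rule Cauchy_Schwarz_ineq2)
    also have "\<dots> \<le> norm v * (K * norm (E y - E x0) * norm v)"
      unfolding K_def by (intro mult_left_mono norm_matrix_vector_mult_le norm_ge_zero)
    also have "\<dots> \<le> norm v * (K * (c / (2 * K)) * norm v)"
      using that \<open>0 < K\<close> by (intro mult_left_mono mult_right_mono) (auto simp: dist_norm)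
    also have "\<dots> = c / 2 * (norm v)\<^sup>2"
      using \<open>0 < K\<close> by (simp add: power2_eq_square)
    finally have "\<bar>v \<bullet> ((E y - E x0) *v v)\<bar> \<le> c / 2 * (norm v)\<^sup>2" .
    moreover have "v \<bullet> (E y *v v) = v \<bullet> (E x0 *v v) + v \<bullet> ((E y - E x0) *v v)"
      by (simp add: matrix_vector_mult_diff_rdistrib inner_diff_right)
    ultimately show ?thesis
      using c(2)[of v] by linarith
  qed
  have "\<forall>\<^sub>F y in nhds x0. \<forall>v. c / 2 * (norm v)\<^sup>2 \<le> v \<bullet> (E y *v v)"
    using near by (rule eventually_mono) (use bound in blast)
  then show ?thesis
    by (rule that[rotated]) (use \<open>0 < c\<close> in simp)
qed

lemma gradient_remainder_le:
  fixes H :: "real^'n \<Rightarrow> real"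
  assumes "\<And>w. w \<in> closed_segment x y \<Longrightarrow> has_gradient_at H (g w) w"
    and "\<And>w. w \<in> closed_segment x y \<Longrightarrow> norm (g w - a) \<le> \<epsilon>"
  shows "\<bar>H y - H x - a \<bullet> (y - x)\<bar> \<le> \<epsilon> * norm (y - x)"
proof -
  have "((\<lambda>w. H w - a \<bullet> w) has_derivative (\<lambda>h. (g w - a) \<bullet> h)) (at w within closed_segment x y)"
    if "w \<in> closed_segment x y" for w
    using has_derivative_at_withinI[OF assms(1)[OF that, unfolded has_gradient_at_def]]
    by (auto intro!: derivative_eq_intros simp: inner_diff_left)
  moreover have "onorm (\<lambda>h. (g w - a) \<bullet> h) \<le> \<epsilon>" if "w \<in> closed_segment x y" for w
    using onorm_inner_right[of "\<lambda>h. h" "g w - a"] assms(2)[OF that] by (simp add: onorm_id)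
  ultimately have "norm ((H y - a \<bullet> y) - (H x - a \<bullet> x)) \<le> \<epsilon> * norm (y - x)"
    by (intro differentiable_bound[of "closed_segment x y"]) auto
  then show ?thesis
    by (simp add: inner_diff_right algebra_simps)
qed

lemma gradient_midpoint_remainder_small:
  fixes H :: "real^'n \<Rightarrow> real"
  assumes "\<And>w. has_gradient_at H (g w) w" "isCont g x0" "0 < \<epsilon>"
  shows "\<forall>\<^sub>F p in nhds (x0, x0).
    \<bar>H (snd p) - H (fst p) - g (midpoint (fst p) (snd p)) \<bullet> (snd p - fst p)\<bar>
      \<le> \<epsilon> * norm (snd p - fst p)"
proof -
  obtain \<delta> where "0 < \<delta>" and \<delta>: "\<And>w. dist w x0 < \<delta> \<Longrightarrow> dist (g w) (g x0) < \<epsilon> / 2"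
    using assms(2,3) unfolding continuous_at_eps_delta by (meson half_gt_zero)
  have "\<bar>H xh - H x - g (midpoint x xh) \<bullet> (xh - x)\<bar> \<le> \<epsilon> * norm (xh - x)"
    if "dist (x, xh) (x0, x0) < \<delta>" for x xh
  proof (rule gradient_remainder_le)
    have "closed_segment x xh \<subseteq> ball x0 \<delta>"
      using that dist_fst_le[of "(x, xh)" "(x0, x0)"] dist_snd_le[of "(x, xh)" "(x0, x0)"]
      by (intro closed_segment_subset) (auto simp: dist_commute)
    then have "dist (g w) (g x0) < \<epsilon> / 2" if "w \<in> closed_segment x xh" for w
      using \<delta> that by (auto simp: dist_commute)
    then show "norm (g w - g (midpoint x xh)) \<le> \<epsilon>" if "w \<in> closed_segment x xh" for w
      using that midpoint_in_closed_segment[of x xh]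
        dist_triangle_half_l[of "g w" "g x0" \<epsilon> "g (midpoint x xh)"]
      by (fastforce simp: dist_norm dist_commute)
  qed (use assms(1) in blast)
  then show ?thesis
    unfolding eventually_nhds_metric using \<open>0 < \<delta>\<close> by force
qed

lemma isCont_iff_tendsto_nhds: "isCont f x \<longleftrightarrow> (f \<longlongrightarrow> f x) (nhds x)"
  unfolding continuous_at by (rule tendsto_at_iff_tendsto_nhds)

lemma C1_with_gradient_continuous:
  assumes "C1_with_gradient H g"
  shows "continuous_on UNIV H" "isCont g x"
  using assms has_derivative_continuous continuous_at_imp_continuous_on
  unfolding C1_with_gradient_def has_gradient_at_def
  by (blast, simp add: continuous_on_eq_continuous_at)

lemma midpoint_correction_tendsto_zero:
  assumes H_C1: "C1_with_gradient H (\<lambda>x. transpose (E x) *v z x)"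
    and "isCont E x0" "pos_def_matrix (E x0)"
  shows "((\<lambda>p. midpoint_correction H E z (fst p) (snd p)) \<longlongrightarrow> 0) (nhds (x0, x0))"
proof (rule tendstoI)
  fix \<epsilon> :: real
  assume "0 < \<epsilon>"
  obtain c where "0 < c" and coercive: "\<forall>\<^sub>F y in nhds x0. \<forall>v. c * (norm v)\<^sup>2 \<le> v \<bullet> (E y *v v)"
    using pos_def_matrix_coercive_near[OF assms(2,3)] by blast
  have "isCont (\<lambda>p. midpoint (fst p) (snd p)) (x0, x0)"
    unfolding midpoint_def by (intro continuous_intros)
  then have "filterlim (\<lambda>p. midpoint (fst p) (snd p)) (nhds x0) (nhds (x0, x0))"
    unfolding isCont_iff_tendsto_nhds by simp
  note coercive_mid = eventually_compose_filterlim[OF coercive this]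
  have remainder: "\<forall>\<^sub>F p in nhds (x0, x0).
      \<bar>H (snd p) - H (fst p)
        - z (midpoint (fst p) (snd p)) \<bullet> (E (midpoint (fst p) (snd p)) *v (snd p - fst p))\<bar>
        \<le> \<epsilon> * c / 2 * norm (snd p - fst p)"
    using gradient_midpoint_remainder_small[of H "\<lambda>x. transpose (E x) *v z x" x0 "\<epsilon> * c / 2"]
      H_C1 C1_with_gradient_continuous(2)[OF H_C1] \<open>0 < \<epsilon>\<close> \<open>0 < c\<close>
    by (simp add: C1_with_gradient_def dot_lmul_matrix)
  show "\<forall>\<^sub>F p in nhds (x0, x0). dist (midpoint_correction H E z (fst p) (snd p)) 0 < \<epsilon>"
    using coercive_mid remainder
  proof eventually_elim
    case (elim p)
    then have "norm (midpoint_correction H E z (fst p) (snd p)) \<le> \<epsilon> * c / 2 / c"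
      unfolding midpoint_correction_def Let_def
      using \<open>0 < \<epsilon>\<close> \<open>0 < c\<close> by (intro norm_scaleR_quotient_le) auto
    then show ?case
      using \<open>0 < \<epsilon>\<close> \<open>0 < c\<close> by simp
  qed
qed

lemma continuous_on_midpoint_correction:
  fixes H :: "real^'n \<Rightarrow> real"
  assumes H_C1: "C1_with_gradient H (\<lambda>x. transpose (E x) *v z x)"
    and E_cont: "continuous_on UNIV E" and z_cont: "continuous_on UNIV z"
    and E_pd: "\<And>x. pos_def_matrix (E x)"
  shows "continuous_on UNIV (\<lambda>p. midpoint_correction H E z (fst p) (snd p))"
  unfolding continuous_on_eq_continuous_at[OF open_UNIV]
proof
  fix p :: "(real^'n) \<times> (real^'n)"
  show "isCont (\<lambda>p. midpoint_correction H E z (fst p) (snd p)) p"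
  proof (cases "snd p = fst p")
    case True
    then obtain x0 where p: "p = (x0, x0)"
      by (metis prod.collapse)
    have "isCont E x0"
      using E_cont by (simp add: continuous_on_eq_continuous_at)
    from midpoint_correction_tendsto_zero[OF H_C1 this E_pd]
    show ?thesis
      unfolding p isCont_iff_tendsto_nhds by (simp add: midpoint_correction_def)
  next
    case False
    define U where "U = {p :: (real^'n) \<times> (real^'n). snd p \<noteq> fst p}"
    have "open U"
      unfolding U_def by (intro open_Collect_neq continuous_intros)
    have "(snd p - fst p) \<bullet> (E (midpoint (fst p) (snd p)) *v (snd p - fst p)) \<noteq> 0" if "p \<in> U" for p
      using pos_def_matrix_inner_pos[OF E_pd[of "midpoint (fst p) (snd p)"], of "snd p - fst p"] that
      by (auto simp: U_def)
    then have "continuous_on U (\<lambda>p. midpoint_correction H E z (fst p) (snd p))"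
      unfolding midpoint_correction_def Let_def midpoint_def
      by (intro continuous_intros continuous_on_compose2[OF C1_with_gradient_continuous(1)[OF H_C1]]
          continuous_on_compose2[OF E_cont] continuous_on_compose2[OF z_cont]) auto
    moreover have "p \<in> U"
      using False by (simp add: U_def)
    ultimately show ?thesis
      using \<open>open U\<close> continuous_on_eq_continuous_at by blast
  qed
qed

lemma midpoint_discrete_gradient_eq:
  "midpoint_discrete_gradient H E z x xh = z (midpoint x xh) + midpoint_correction H E z x xh"
  by (simp add: midpoint_discrete_gradient_def midpoint_correction_def)

lemma midpoint_discrete_gradient_inner:
  assumes "pos_def_matrix (E (midpoint x xh))"
  shows "midpoint_discrete_gradient H E z x xh \<bullet> (E (midpoint x xh) *v (xh - x)) = H xh - H x"
proof (cases "xh = x")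
  case False
  then have "(xh - x) \<bullet> (E (midpoint x xh) *v (xh - x)) \<noteq> 0"
    using pos_def_matrix_inner_pos[OF assms, of "xh - x"] by auto
  then show ?thesis
    using False
    by (simp add: midpoint_discrete_gradient_def midpoint_correction_def Let_def
        inner_add_quotient_scaleR)
qed (simp add: midpoint_discrete_gradient_def)

theorem theorem1:
  fixes H :: "real^'n \<Rightarrow> real"
    and E :: "real^'n \<Rightarrow> real^'n^'n"
    and z :: "real^'n \<Rightarrow> real^'n"
  assumes H_C1: "C1_with_gradient H (\<lambda>x. transpose (E x) *v z x)"
    and E_cont: "continuous_on UNIV E"
    and z_cont: "continuous_on UNIV z"
    and E_sym: "\<And>x. symmetric_matrix (E x)"
    and E_pd: "\<And>x. pos_def_matrix (E x)"
  shows "discrete_gradient_pair H E z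
           (\<lambda>x xh. E ((1/2) *\<^sub>R (xh + x)))
           (\<lambda>x xh. if xh \<noteq> x then
                z ((1/2) *\<^sub>R (xh + x)) +
                ((H xh - H x - z ((1/2) *\<^sub>R (xh + x)) \<bullet> (E ((1/2) *\<^sub>R (xh + x)) *v (xh - x)))
                  / ((xh - x) \<bullet> (E ((1/2) *\<^sub>R (xh + x)) *v (xh - x)))) *\<^sub>R (xh - x)
              else z x)"
proof -
  have "discrete_gradient_pair H E z (\<lambda>x xh. E (midpoint x xh)) (midpoint_discrete_gradient H E z)"
    unfolding discrete_gradient_pair_def
  proof (intro conjI allI)
    show "continuous_on UNIV (\<lambda>p. E (midpoint (fst p) (snd p)))"
      unfolding midpoint_def by (intro continuous_on_compose2[OF E_cont] continuous_intros) auto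
    show "continuous_on UNIV (\<lambda>p. midpoint_discrete_gradient H E z (fst p) (snd p))"
      unfolding midpoint_discrete_gradient_eq midpoint_def
      by (intro continuous_intros continuous_on_compose2[OF z_cont]
          continuous_on_midpoint_correction[OF H_C1 E_cont z_cont E_pd, unfolded midpoint_def]) auto
    show "midpoint_discrete_gradient H E z x xh \<bullet> (E (midpoint x xh) *v (xh - x)) = H xh - H x" for x xh
      using E_pd by (rule midpoint_discrete_gradient_inner)
  qed (simp_all add: midpoint_discrete_gradient_def)
  then show ?thesis
    by (simp only: midpoint_discrete_gradient_def[abs_def] midpoint_correction_def Let_def
        midpoint_eq_half_sum)
qed

end
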